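(* Let $\Omega$ be a region of $\mathbb{C}$ and let $F:\Omega\to\mathbb{M}_n$ be a nonconstant analytic function. If $z_0\in\Omega$ is a point at which every one of the functions $z\mapsto s_k(F(z))$, $1\leq k\leq n$, attains its minimum value over $\Omega$, then $F(z_0)$ is not invertible.
   Context: A region is a nonempty open connected subset of $\mathbb{C}$. $\mathbb{M}_n$ is the set of $n\times n$ complex matrices; $F$ is analytic if each entry is analytic. For $A\in\mathbb{M}_n$, the singular values $s_1(A)\geq\cdots\geq s_n(A)$ are the nonnegative square roots of the eigenvalues of $A^*A$ in nonincreasing order. *)

theory Defs
  imports "HOL-Analysis.Analysis" "Jordan_Normal_Form.Schur_Decomposition"
begin

text \<open>The eigenvalues of the (positive semidefinite) matrix A^* A, counted with
  algebraic multiplicity, are the roots of its characteristic polynomial.\<close>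

definition singular_values :: "complex mat \<Rightarrow> real list" where
  "singular_values A =
     rev (sorted_list_of_multiset
       (image_mset (\<lambda>x. sqrt (Re x)) (proots (char_poly (mat_adjoint A * A)))))"

definition sing_val :: "nat \<Rightarrow> complex mat \<Rightarrow> real" where
  "sing_val k A = singular_values A ! (k - 1)"

end

theory Submission
  imports Defs "HOL-Complex_Analysis.Complex_Analysis"
begin

(* Suppose F(z0) is invertible. Since |det F| is the product of the singular values, |det F|
   attains a positive minimum at z0, so det F is constant by the minimum modulus principle.
   A product of termwise smaller nonnegative factors equals the original product only if all
   factors agree, so every singular value is constant, and hence so is the Frobenius norm,
   the sum of the squared singular values. Then the squared distance from F(z) to F(z0) is
   2 Re <F(z0), F(z0) - F(z)>, a harmonic function that is nonnegative and vanishes at z0;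
   by the minimum principle it vanishes identically, so F is constant. *)

lemma carrier_mat_adjoint: "A \<in> carrier_mat m n \<Longrightarrow> mat_adjoint A \<in> carrier_mat n m"
  unfolding mat_adjoint_def by (auto simp: mat_of_rows_def)

lemma index_mat_adjoint:
  "A \<in> carrier_mat m n \<Longrightarrow> i < n \<Longrightarrow> j < m \<Longrightarrow> mat_adjoint A $$ (i, j) = cnj (A $$ (j, i))"
  unfolding mat_adjoint_def by (auto simp: mat_of_rows_def)

lemma cnj_mult_self: "cnj z * z = complex_of_real ((cmod z)\<^sup>2)"
  by (metis complex_norm_square mult.commute of_real_power)

lemma index_adjoint_mult_self_mult_vec:
  assumes A: "A \<in> carrier_mat m n" and v: "v \<in> carrier_vec n" and i: "i < n"
  shows "((mat_adjoint A * A) *\<^sub>v v) $ i = (\<Sum>k<m. cnj (A $$ (k, i)) * (A *\<^sub>v v) $ k)"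
proof -
  have "(mat_adjoint A * A) *\<^sub>v v = mat_adjoint A *\<^sub>v (A *\<^sub>v v)"
    using carrier_mat_adjoint[OF A] A v by simp
  then show ?thesis
    using carrier_mat_adjoint[OF A] A i
    by (simp add: scalar_prod_def index_mat_adjoint atLeast0LessThan)
qed

lemma eigenvalue_adjoint_mult_self:
  fixes A :: "complex mat"
  assumes A: "A \<in> carrier_mat m n" and x: "eigenvalue (mat_adjoint A * A) x"
  shows "Im x = 0 \<and> 0 \<le> Re x"
proof -
  let ?B = "mat_adjoint A * A"
  have B: "?B \<in> carrier_mat n n"
    using carrier_mat_adjoint[OF A] A by auto
  obtain v where v: "v \<in> carrier_vec n" "v \<noteq> 0\<^sub>v n" "?B *\<^sub>v v = x \<cdot>\<^sub>v v"
    using x B unfolding eigenvalue_def eigenvector_def by auto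
  define w where "w = A *\<^sub>v v"
  define S where "S = (\<Sum>i<n. (cmod (v $ i))\<^sup>2)"
  define T where "T = (\<Sum>k<m. (cmod (w $ k))\<^sup>2)"
  have "(\<Sum>i<n. cnj (v $ i) * (?B *\<^sub>v v) $ i)
      = (\<Sum>i<n. \<Sum>k<m. cnj (A $$ (k, i) * v $ i) * w $ k)"
    using index_adjoint_mult_self_mult_vec[OF A v(1)] unfolding w_def
    by (simp add: sum_distrib_left mult_ac)
  also have "\<dots> = (\<Sum>k<m. (\<Sum>i<n. cnj (A $$ (k, i) * v $ i)) * w $ k)"
    by (subst sum.swap) (simp add: sum_distrib_right)
  also have "\<dots> = (\<Sum>k<m. cnj (w $ k) * w $ k)"
    using A v(1) by (simp add: w_def scalar_prod_def atLeast0LessThan cnj_sum)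
  also have "\<dots> = of_real T"
    by (simp add: T_def cnj_mult_self)
  finally have quad: "(\<Sum>i<n. cnj (v $ i) * (?B *\<^sub>v v) $ i) = of_real T" .
  have "(\<Sum>i<n. cnj (v $ i) * (?B *\<^sub>v v) $ i) = x * of_real S"
    using v by (simp add: S_def sum_distrib_left mult.left_commute cnj_mult_self)
  with quad have eq: "x * of_real S = of_real T" by simp
  obtain i where i: "i < n" "v $ i \<noteq> 0"
    using v(1,2) by (metis carrier_vecD eq_vecI index_zero_vec)
  have "S > 0"
    unfolding S_def by (rule sum_pos2[of _ i]) (use i in auto)
  moreover have "T \<ge> 0"
    unfolding T_def by (simp add: sum_nonneg)
  moreover have "x = of_real (T / S)"
    using eq \<open>S > 0\<close> by (simp add: eq_divide_eq)
  ultimately show ?thesis by simp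
qed

definition mat_trace :: "'a::comm_ring_1 mat \<Rightarrow> 'a" where
  "mat_trace A = (\<Sum>i<dim_row A. A $$ (i, i))"

lemma mat_trace_mult_comm:
  assumes A: "A \<in> carrier_mat n m" and B: "B \<in> carrier_mat m n"
  shows "mat_trace (A * B) = mat_trace (B * A)"
proof -
  have "mat_trace (A * B) = (\<Sum>i<n. \<Sum>k<m. A $$ (i, k) * B $$ (k, i))"
    using A B by (simp add: mat_trace_def scalar_prod_def atLeast0LessThan)
  also have "\<dots> = (\<Sum>k<m. \<Sum>i<n. B $$ (k, i) * A $$ (i, k))"
    by (subst sum.swap) (simp add: mult.commute)
  also have "\<dots> = mat_trace (B * A)"
    using A B by (simp add: mat_trace_def scalar_prod_def atLeast0LessThan)
  finally show ?thesis .
qed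

lemma mat_trace_similar:
  assumes "similar_mat A B"
  shows "mat_trace A = mat_trace B"
proof -
  obtain n P Q where carr: "{A, B, P, Q} \<subseteq> carrier_mat n n"
    and QP: "Q * P = 1\<^sub>m n" and AB: "A = P * B * Q"
    using similar_matD[OF assms] by blast
  have "mat_trace A = mat_trace (Q * (P * B))"
    unfolding AB using carr by (intro mat_trace_mult_comm[of _ n n]) auto
  also have "Q * (P * B) = B"
    using carr QP by (auto simp: assoc_mult_mat[of Q n n P n B n, symmetric])
  finally show ?thesis .
qed

lemma
  fixes A :: "'a::conjugatable_ordered_field mat"
  assumes A: "A \<in> carrier_mat n n" and char_poly: "char_poly A = (\<Prod>a\<leftarrow>as. [:- a, 1:])"
  shows mat_trace_eq_sum_roots_char_poly: "mat_trace A = sum_list as"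
    and det_eq_prod_roots_char_poly: "det A = prod_list as"
proof -
  obtain C P Q where "schur_decomposition A as = (C, P, Q)"
    by (cases "schur_decomposition A as")
  with schur_decomposition[OF A char_poly] have sim: "similar_mat A C"
    and ut: "upper_triangular C" and diag: "diag_mat C = as"
    unfolding similar_mat_def by auto
  have C: "C \<in> carrier_mat n n"
    using similar_matD[OF sim] A by auto
  show "mat_trace A = sum_list as"
    using mat_trace_similar[OF sim] C
    by (simp add: mat_trace_def diag_mat_def atLeast0LessThan flip: diag sum_set_upt_conv_sum_list_nat)
  show "det A = prod_list as"
    using det_similar[OF sim] det_upper_triangular[OF ut C] diag by simp
qed

interpretation cnj_hom: comm_ring_hom cnj
  by unfold_locales auto

lemma det_mat_adjoint:
  fixes A :: "complex mat"
  assumes A: "A \<in> carrier_mat n n"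
  shows "det (mat_adjoint A) = cnj (det A)"
proof -
  have "mat_adjoint A = map_mat cnj (transpose_mat A)"
    using A carrier_mat_adjoint[OF A] by (intro eq_matI) (auto simp: index_mat_adjoint)
  then show ?thesis
    using det_transpose[OF A] by simp
qed

definition frobenius_sq :: "complex mat \<Rightarrow> real" where
  "frobenius_sq A = (\<Sum>ij\<in>{..<dim_row A} \<times> {..<dim_col A}. (cmod (A $$ ij))\<^sup>2)"

lemma mat_trace_adjoint_mult_self:
  assumes A: "A \<in> carrier_mat m n"
  shows "mat_trace (mat_adjoint A * A) = of_real (frobenius_sq A)"
proof -
  have "mat_trace (mat_adjoint A * A) = (\<Sum>j<n. \<Sum>i<m. cnj (A $$ (i, j)) * A $$ (i, j))"
    using A carrier_mat_adjoint[OF A]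
    by (simp add: mat_trace_def scalar_prod_def index_mat_adjoint atLeast0LessThan)
  also have "\<dots> = of_real (\<Sum>i<m. \<Sum>j<n. (cmod (A $$ (i, j)))\<^sup>2)"
    by (subst sum.swap) (simp add: cnj_mult_self)
  also have "(\<Sum>i<m. \<Sum>j<n. (cmod (A $$ (i, j)))\<^sup>2) = frobenius_sq A"
    using A by (simp add: frobenius_sq_def sum.cartesian_product)
  finally show ?thesis .
qed

lemma proots_prod_linear_factors: "proots (\<Prod>a\<leftarrow>as. [:- a, 1:]) = mset as"
proof (induction as)
  case (Cons a as)
  have "(\<Prod>a\<leftarrow>as. [:- a, 1:]) \<noteq> 0"
    by (auto simp: prod_list_zero_iff)
  then show ?case
    using Cons by (simp del: mult_pCons_left add: proots_mult)
qed simp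

lemma singular_values_eigenvalues:
  fixes A :: "complex mat"
  assumes A: "A \<in> carrier_mat m n"
  obtains rs where "char_poly (mat_adjoint A * A) = (\<Prod>a\<leftarrow>map complex_of_real rs. [:- a, 1:])"
    and "length rs = n" and "\<forall>r\<in>set rs. 0 \<le> r"
    and "mset (singular_values A) = mset (map sqrt rs)"
proof -
  let ?B = "mat_adjoint A * A"
  have B: "?B \<in> carrier_mat n n"
    using carrier_mat_adjoint[OF A] A by auto
  obtain as where char_poly: "char_poly ?B = (\<Prod>a\<leftarrow>as. [:- a, 1:])" and len: "length as = n"
    using char_poly_factorized[OF B] by blast
  have eigenvalues: "Im a = 0 \<and> 0 \<le> Re a" if "a \<in> set as" for a
  proof -
    have "poly (char_poly ?B) a = 0"
      using that unfolding char_poly by (simp add: poly_prod_list prod_list_zero_iff)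
    then show ?thesis
      using eigenvalue_adjoint_mult_self[OF A] eigenvalue_root_char_poly[OF B] by blast
  qed
  then have "as = map (complex_of_real \<circ> Re) as"
    by (intro map_idI[symmetric]) (simp add: complex_eq_iff)
  then have as: "as = map complex_of_real (map Re as)"
    by simp
  show thesis
  proof
    show "char_poly ?B = (\<Prod>a\<leftarrow>map complex_of_real (map Re as). [:- a, 1:])"
      using char_poly as by simp
    show "length (map Re as) = n" "\<forall>r\<in>set (map Re as). 0 \<le> r"
      using len eigenvalues by auto
    show "mset (singular_values A) = mset (map sqrt (map Re as))"
      unfolding singular_values_def char_poly proots_prod_linear_factors by (simp add: comp_def)
  qed
qed

lemma length_singular_values:
  assumes "A \<in> carrier_mat m n"
  shows "length (singular_values A) = n"
  by (rule singular_values_eigenvalues[OF assms]) (metis length_map size_mset)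

lemma singular_values_nonneg:
  assumes "A \<in> carrier_mat m n" and "s \<in> set (singular_values A)"
  shows "0 \<le> s"
proof (rule singular_values_eigenvalues[OF assms(1)])
  fix rs
  assume "mset (singular_values A) = mset (map sqrt rs)" and "\<forall>r\<in>set rs. 0 \<le> r"
  then show "0 \<le> s"
    using assms(2) by (metis imageE real_sqrt_ge_zero set_map set_mset_mset)
qed

lemma sum_list_singular_values_sq:
  assumes A: "A \<in> carrier_mat m n"
  shows "(\<Sum>s\<leftarrow>singular_values A. s\<^sup>2) = frobenius_sq A"
proof (rule singular_values_eigenvalues[OF A])
  fix rs
  assume char_poly: "char_poly (mat_adjoint A * A) = (\<Prod>a\<leftarrow>map complex_of_real rs. [:- a, 1:])"
    and nonneg: "\<forall>r\<in>set rs. 0 \<le> r" and sv: "mset (singular_values A) = mset (map sqrt rs)"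
  have B: "mat_adjoint A * A \<in> carrier_mat n n"
    using carrier_mat_adjoint[OF A] A by auto
  have "(\<Sum>s\<leftarrow>singular_values A. s\<^sup>2) = (\<Sum>s\<leftarrow>map sqrt rs. s\<^sup>2)"
    by (metis sv mset_map sum_mset_sum_list)
  also have "\<dots> = sum_list rs"
    using nonneg by (induction rs) auto
  also have "sum_list rs = frobenius_sq A"
  proof -
    have "complex_of_real (sum_list rs) = sum_list (map complex_of_real rs)"
      by (induction rs) auto
    also have "\<dots> = mat_trace (mat_adjoint A * A)"
      using mat_trace_eq_sum_roots_char_poly[OF B char_poly] by simp
    also have "\<dots> = complex_of_real (frobenius_sq A)"
      by (rule mat_trace_adjoint_mult_self[OF A])
    finally show ?thesis
      using of_real_eq_iff by blast
  qed
  finally show ?thesis .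
qed

lemma prod_list_singular_values:
  assumes A: "A \<in> carrier_mat n n"
  shows "prod_list (singular_values A) = cmod (det A)"
proof (rule singular_values_eigenvalues[OF A])
  fix rs
  assume char_poly: "char_poly (mat_adjoint A * A) = (\<Prod>a\<leftarrow>map complex_of_real rs. [:- a, 1:])"
    and sv: "mset (singular_values A) = mset (map sqrt rs)"
  have B: "mat_adjoint A * A \<in> carrier_mat n n"
    using carrier_mat_adjoint[OF A] A by auto
  have "complex_of_real (prod_list rs) = prod_list (map complex_of_real rs)"
    by (induction rs) auto
  also have "\<dots> = det (mat_adjoint A * A)"
    using det_eq_prod_roots_char_poly[OF B char_poly] by simp
  also have "\<dots> = cnj (det A) * det A"
    using det_mult[OF carrier_mat_adjoint[OF A] A] det_mat_adjoint[OF A] by simp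
  also have "\<dots> = complex_of_real ((cmod (det A))\<^sup>2)"
    by (rule cnj_mult_self)
  finally have "prod_list rs = (cmod (det A))\<^sup>2"
    using of_real_eq_iff by blast
  moreover have "prod_list (singular_values A) = prod_list (map sqrt rs)"
    by (metis sv prod_mset_prod_list)
  moreover have "prod_list (map sqrt rs) = sqrt (prod_list rs)"
    by (induction rs) (simp_all add: real_sqrt_mult)
  ultimately show ?thesis
    by simp
qed

lemma prod_list_mono:
  fixes xs ys :: "real list"
  assumes "list_all2 (\<lambda>x y. 0 \<le> x \<and> x \<le> y) xs ys"
  shows "prod_list xs \<le> prod_list ys"
proof -
  have "0 \<le> prod_list xs \<and> prod_list xs \<le> prod_list ys"
    using assms by (induction rule: list_all2_induct) (auto intro: mult_mono)
  then show ?thesis ..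
qed

lemma prod_list_mono_eq:
  fixes xs ys :: "real list"
  assumes "list_all2 (\<lambda>x y. 0 \<le> x \<and> x \<le> y) xs ys"
    and "prod_list xs = prod_list ys" and "prod_list xs \<noteq> 0"
  shows "xs = ys"
  using assms
proof (induction rule: list_all2_induct)
  case (Cons x xs y ys)
  have "0 \<le> prod_list xs"
    using Cons.hyps(2) by (induction rule: list_all2_induct) auto
  moreover have "prod_list xs \<le> prod_list ys"
    using Cons.hyps(2) by (rule prod_list_mono)
  ultimately have "x * prod_list xs \<le> x * prod_list ys" "x * prod_list ys \<le> y * prod_list ys"
    using Cons.hyps(1) by (auto intro: mult_left_mono mult_right_mono)
  then have "x * prod_list xs = x * prod_list ys" "x * prod_list ys = y * prod_list ys"
    using Cons.prems(1) by auto
  then have "prod_list xs = prod_list ys" "x = y"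
    using Cons.prems(2) by auto
  with Cons.IH Cons.prems(2) show ?case
    by simp
qed simp

lemma list_all2_singular_values_le:
  assumes A: "A \<in> carrier_mat m n" and B: "B \<in> carrier_mat p n"
    and le: "\<And>k. 1 \<le> k \<Longrightarrow> k \<le> n \<Longrightarrow> sing_val k A \<le> sing_val k B"
  shows "list_all2 (\<lambda>x y. 0 \<le> x \<and> x \<le> y) (singular_values A) (singular_values B)"
proof (rule list_all2_all_nthI)
  fix i assume "i < length (singular_values A)"
  then show "0 \<le> singular_values A ! i \<and> singular_values A ! i \<le> singular_values B ! i"
    using le[of "Suc i"] singular_values_nonneg[OF A]
    by (simp add: length_singular_values[OF A] sing_val_def)
qed (simp add: length_singular_values[OF A] length_singular_values[OF B])

lemma cmod_det_mono_singular_values: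
  assumes A: "A \<in> carrier_mat n n" and B: "B \<in> carrier_mat n n"
    and le: "list_all2 (\<lambda>x y. 0 \<le> x \<and> x \<le> y) (singular_values A) (singular_values B)"
  shows "cmod (det A) \<le> cmod (det B)"
  using prod_list_mono[OF le]
  unfolding prod_list_singular_values[OF A] prod_list_singular_values[OF B] .

lemma singular_values_eq_if_cmod_det_eq:
  assumes A: "A \<in> carrier_mat n n" and B: "B \<in> carrier_mat n n"
    and le: "list_all2 (\<lambda>x y. 0 \<le> x \<and> x \<le> y) (singular_values A) (singular_values B)"
    and det: "cmod (det A) = cmod (det B)" "det A \<noteq> 0"
  shows "singular_values A = singular_values B"
proof (rule prod_list_mono_eq[OF le])
  show "prod_list (singular_values A) = prod_list (singular_values B)"
    using det(1) by (simp only: prod_list_singular_values[OF A] prod_list_singular_values[OF B])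
  show "prod_list (singular_values A) \<noteq> 0"
    using det(2) by (simp only: prod_list_singular_values[OF A] norm_eq_zero not_False_eq_True)
qed

lemma invertible_mat_det_nonzero:
  fixes A :: "'a::comm_ring_1 mat"
  assumes A: "A \<in> carrier_mat n n" and inv: "invertible_mat A"
  shows "det A \<noteq> 0"
proof -
  obtain B where AB: "A * B = 1\<^sub>m n" and BA: "B * A = 1\<^sub>m (dim_row B)"
    using inv A unfolding invertible_mat_def inverts_mat_def by auto
  have "B \<in> carrier_mat n n"
    using arg_cong[OF AB, of dim_col] arg_cong[OF BA, of dim_col] A by auto
  then have "det A * det B = 1"
    using arg_cong[OF AB, of det] det_mult[OF A] by simp
  then show ?thesis
    by auto
qed

lemma cmod_diff_square: "(cmod (x - y))\<^sup>2 = (cmod x)\<^sup>2 + (cmod y)\<^sup>2 - 2 * Re (cnj y * x)"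
  by (simp only: cmod_power2) (simp add: power2_eq_square algebra_simps)

lemma holomorphic_on_det:
  assumes dims: "\<And>z. z \<in> S \<Longrightarrow> F z \<in> carrier_mat n n"
    and hol: "\<And>i j. i < n \<Longrightarrow> j < n \<Longrightarrow> (\<lambda>z. F z $$ (i, j)) holomorphic_on S"
  shows "(\<lambda>z. det (F z)) holomorphic_on S"
proof (rule holomorphic_transform)
  show "(\<lambda>z. \<Sum>p\<in>{p. p permutes {0..<n}}. signof p * (\<Prod>i=0..<n. F z $$ (i, p i)))
      holomorphic_on S"
    by (intro holomorphic_intros hol) (auto dest: permutes_in_image)
  show "(\<Sum>p\<in>{p. p permutes {0..<n}}. signof p * (\<Prod>i=0..<n. F z $$ (i, p i))) = det (F z)"
    if "z \<in> S" for z
    using det_def'[OF dims[OF that]] by simp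
qed

lemma minimum_modulus_principle:
  assumes holf: "f holomorphic_on S" and S: "open S" "connected S"
    and \<xi>: "\<xi> \<in> S" "f \<xi> \<noteq> 0" and min: "\<And>z. z \<in> S \<Longrightarrow> norm (f \<xi>) \<le> norm (f z)"
  shows "f constant_on S"
proof -
  have "(\<lambda>z. inverse (f z)) holomorphic_on S"
    using holf min \<xi>(2) by (intro holomorphic_on_inverse) force+
  then have "(\<lambda>z. inverse (f z)) constant_on S"
    by (rule maximum_modulus_principle[OF _ S S(1) order_refl \<xi>(1)])
       (use min \<xi>(2) in \<open>simp add: norm_inverse le_imp_inverse_le\<close>)
  then show ?thesis
    unfolding constant_on_def by (metis inverse_inverse_eq)
qed

lemma holomorphic_Re_maximum_principle:
  assumes holf: "f holomorphic_on S" and S: "open S" "connected S" and \<xi>: "\<xi> \<in> S"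
    and max: "\<And>z. z \<in> S \<Longrightarrow> Re (f z) \<le> Re (f \<xi>)" and z: "z \<in> S"
  shows "Re (f z) = Re (f \<xi>)"
proof -
  have "(\<lambda>z. exp (f z)) holomorphic_on S"
    using holf by (intro holomorphic_intros)
  then have "(\<lambda>z. exp (f z)) constant_on S"
    by (rule maximum_modulus_principle[OF _ S S(1) order_refl \<xi>]) (simp add: norm_exp_eq_Re max)
  then have "norm (exp (f z)) = norm (exp (f \<xi>))"
    using z \<xi> unfolding constant_on_def by metis
  then show ?thesis
    by (simp add: norm_exp_eq_Re)
qed

lemma holomorphic_family_constant_sum_sq:
  fixes f :: "'i \<Rightarrow> complex \<Rightarrow> complex"
  assumes I: "finite I" and hol: "\<And>j. j \<in> I \<Longrightarrow> f j holomorphic_on S"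
    and S: "open S" "connected S" and \<xi>: "\<xi> \<in> S"
    and const: "\<And>z. z \<in> S \<Longrightarrow> (\<Sum>j\<in>I. (cmod (f j z))\<^sup>2) = (\<Sum>j\<in>I. (cmod (f j \<xi>))\<^sup>2)"
    and z: "z \<in> S" and j: "j \<in> I"
  shows "f j z = f j \<xi>"
proof -
  define g where "g z = (\<Sum>j\<in>I. cnj (f j \<xi>) * f j z)" for z
  have dist: "(\<Sum>j\<in>I. (cmod (f j z - f j \<xi>))\<^sup>2) = 2 * Re (g \<xi>) - 2 * Re (g z)"
    if "z \<in> S" for z
    using const[OF that]
    by (simp add: g_def cmod_diff_square cnj_mult_self sum_subtractf sum.distrib Re_sum sum_distrib_left)
  have "Re (g z) = Re (g \<xi>)"
  proof (rule holomorphic_Re_maximum_principle[OF _ S \<xi> _ z])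
    show "g holomorphic_on S"
      unfolding g_def by (intro holomorphic_intros hol)
    show "Re (g w) \<le> Re (g \<xi>)" if "w \<in> S" for w
      using dist[OF that] sum_nonneg[of I "\<lambda>j. (cmod (f j w - f j \<xi>))\<^sup>2"] by simp
  qed
  then have "(\<Sum>j\<in>I. (cmod (f j z - f j \<xi>))\<^sup>2) = 0"
    using dist[OF z] by simp
  then show ?thesis
    using I j by (simp add: sum_nonneg_eq_0_iff)
qed

lemma holomorphic_mat_constant_frobenius_sq:
  assumes dims: "\<And>z. z \<in> S \<Longrightarrow> F z \<in> carrier_mat m n"
    and hol: "\<And>i j. i < m \<Longrightarrow> j < n \<Longrightarrow> (\<lambda>z. F z $$ (i, j)) holomorphic_on S"
    and S: "open S" "connected S" and \<xi>: "\<xi> \<in> S"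
    and const: "\<And>z. z \<in> S \<Longrightarrow> frobenius_sq (F z) = frobenius_sq (F \<xi>)"
    and z: "z \<in> S"
  shows "F z = F \<xi>"
proof -
  have "F z $$ ij = F \<xi> $$ ij" if "ij \<in> {..<m} \<times> {..<n}" for ij
  proof (rule holomorphic_family_constant_sum_sq[where f = "\<lambda>ij z. F z $$ ij", OF _ _ S \<xi> _ z that])
    show "(\<lambda>z. F z $$ ij) holomorphic_on S" if "ij \<in> {..<m} \<times> {..<n}" for ij
      using hol that by auto
    show "(\<Sum>ij\<in>{..<m} \<times> {..<n}. (cmod (F w $$ ij))\<^sup>2)
        = (\<Sum>ij\<in>{..<m} \<times> {..<n}. (cmod (F \<xi> $$ ij))\<^sup>2)" if "w \<in> S" for w
      using const[OF that] dims[OF that] dims[OF \<xi>] by (simp add: frobenius_sq_def)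
  qed simp
  then show ?thesis
    using dims[OF z] dims[OF \<xi>] by (intro eq_matI) auto
qed

theorem theorem9:
  fixes \<Omega> :: "complex set" and F :: "complex \<Rightarrow> complex mat" and n :: nat and z0 :: complex
  assumes region: "open \<Omega>" "connected \<Omega>" "\<Omega> \<noteq> {}"
    and dims: "\<And>z. z \<in> \<Omega> \<Longrightarrow> F z \<in> carrier_mat n n"
    and analytic: "\<And>i j. i < n \<Longrightarrow> j < n \<Longrightarrow> (\<lambda>z. F z $$ (i, j)) analytic_on \<Omega>"
    and nonconst: "\<not> (\<exists>C. \<forall>z\<in>\<Omega>. F z = C)"
    and z0: "z0 \<in> \<Omega>"
    and minimum: "\<And>k z. 1 \<le> k \<Longrightarrow> k \<le> n \<Longrightarrow> z \<in> \<Omega> \<Longrightarrow> sing_val k (F z0) \<le> sing_val k (F z)"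
  shows "\<not> invertible_mat (F z0)"
proof
  assume "invertible_mat (F z0)"
  then have det0: "det (F z0) \<noteq> 0"
    by (rule invertible_mat_det_nonzero[OF dims[OF z0]])
  have hol: "\<And>i j. i < n \<Longrightarrow> j < n \<Longrightarrow> (\<lambda>z. F z $$ (i, j)) holomorphic_on \<Omega>"
    using analytic by (simp add: analytic_imp_holomorphic)
  have sv_le: "list_all2 (\<lambda>x y. 0 \<le> x \<and> x \<le> y) (singular_values (F z0)) (singular_values (F z))"
    if "z \<in> \<Omega>" for z
    using list_all2_singular_values_le[OF dims[OF z0] dims[OF that]] minimum that by blast
  then have "cmod (det (F z0)) \<le> cmod (det (F z))" if "z \<in> \<Omega>" for z
    using cmod_det_mono_singular_values dims z0 that by blast
  then have "(\<lambda>z. det (F z)) constant_on \<Omega>"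
    using holomorphic_on_det[OF dims hol] region(1,2) z0 det0 by (intro minimum_modulus_principle)
  then have "singular_values (F z0) = singular_values (F z)" if "z \<in> \<Omega>" for z
    using singular_values_eq_if_cmod_det_eq[OF dims[OF z0] dims[OF that] sv_le[OF that]] det0 z0 that
    unfolding constant_on_def by metis
  then have "frobenius_sq (F z) = frobenius_sq (F z0)" if "z \<in> \<Omega>" for z
    using sum_list_singular_values_sq dims z0 that by metis
  then have "F z = F z0" if "z \<in> \<Omega>" for z
    using holomorphic_mat_constant_frobenius_sq[OF dims hol region(1,2) z0] that by blast
  then show False
    using nonconst by blast
qed

end
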